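(* Let $N$ be a positive integer, $L>0$, and $\zeta=(\zeta_0,\dots,\zeta_{N+2})\in\mathbb{R}^{N+3}$ with $\zeta_0>\zeta_1>\dots>\zeta_{N+1}>\zeta_{N+2}=0$. With $f_k$ and $W^\zeta$ as defined in the context and $W^{\zeta,*}=\min_{y\in\mathbb{R}^{N+1}}W^\zeta(y)$, if $\bar y=(\bar y_0,\dots,\bar y_N)\in\mathbb{R}^{N+1}$ satisfies $\bar y_k\geq 0$ for some $k\in\{0,\dots,N\}$, then \[ W^\zeta(\bar y)-W^{\zeta,*}\geq f_k. \]
   Context: Let $e_0,\dots,e_N$ denote the standard unit vectors of $\mathbb{R}^{N+1}$ (zero-based indexing). Define for $i=0,\dots,N+1$: $x_i=-\sum_{j=0}^{i-1}\frac{\zeta_j-\zeta_{i+1}}{\sqrt{\zeta_j-\zeta_{j+1}}}e_j\in\mathbb{R}^{N+1}$; $g_i=L\sqrt{\zeta_i-\zeta_{i+1}}\,e_i$ for $i=0,\dots,N$ and $g_{N+1}=0$; $f_i=\frac L2(\zeta_i+\zeta_{i+1})$ for $i=0,\dots,N$ and $f_{N+1}=0$. For $y\in\mathbb{R}^{N+1}$, $\nu\in\mathbb{R}^{N+1}$, $\alpha=(\alpha_0,\dots,\alpha_{N+1})\in\mathbb{R}^{N+2}$ let $w^\zeta(y,\nu,\alpha)=\frac L2\|y+\nu-\sum_{i=0}^{N+1}\alpha_i(x_i-\frac1Lg_i)\|^2+\sum_{i=0}^{N+1}\alpha_i(f_i-\frac1{2L}\|g_i\|^2)$, and $W^\zeta(y)=\min\{w^\zeta(y,\nu,\alpha):\nu\in\mathbb{R}^{N+1}_+,\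 \alpha\in\Delta_{N+2}\}$, where $\mathbb{R}^{N+1}_+$ is the nonnegative orthant and $\Delta_{N+2}=\{\alpha\in\mathbb{R}^{N+2}:\alpha_i\geq0,\ \sum_i\alpha_i=1\}$. *)

theory Defs
  imports Complex_Main
begin

text \<open>Vectors of R^(N+1) are represented as functions nat => real; only the
components 0..N are used. zeta :: nat => real, only zeta 0 .. zeta (N+2) used.\<close>

definition xv :: "nat \<Rightarrow> (nat \<Rightarrow> real) \<Rightarrow> nat \<Rightarrow> nat \<Rightarrow> real" where
  "xv N \<zeta> i j = (if j < i \<and> j \<le> N
      then - ((\<zeta> j - \<zeta> (Suc i)) / sqrt (\<zeta> j - \<zeta> (Suc j))) else 0)"

definition gv :: "nat \<Rightarrow> real \<Rightarrow> (nat \<Rightarrow> real) \<Rightarrow> nat \<Rightarrow> nat \<Rightarrow> real" where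
  "gv N L \<zeta> i j = (if j = i \<and> i \<le> N then L * sqrt (\<zeta> i - \<zeta> (Suc i)) else 0)"

definition fv :: "nat \<Rightarrow> real \<Rightarrow> (nat \<Rightarrow> real) \<Rightarrow> nat \<Rightarrow> real" where
  "fv N L \<zeta> i = (if i \<le> N then L / 2 * (\<zeta> i + \<zeta> (Suc i)) else 0)"

definition sqnorm :: "nat \<Rightarrow> (nat \<Rightarrow> real) \<Rightarrow> real" where
  "sqnorm N v = (\<Sum>j\<le>N. (v j)\<^sup>2)"

definition wfun :: "nat \<Rightarrow> real \<Rightarrow> (nat \<Rightarrow> real) \<Rightarrow> (nat \<Rightarrow> real) \<Rightarrow> (nat \<Rightarrow> real)
    \<Rightarrow> (nat \<Rightarrow> real) \<Rightarrow> real" where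
  "wfun N L \<zeta> y \<nu> \<alpha> =
     L / 2 * sqnorm N (\<lambda>j. y j + \<nu> j
        - (\<Sum>i\<le>Suc N. \<alpha> i * (xv N \<zeta> i j - gv N L \<zeta> i j / L)))
     + (\<Sum>i\<le>Suc N. \<alpha> i * (fv N L \<zeta> i - sqnorm N (gv N L \<zeta> i) / (2 * L)))"

definition Wfun :: "nat \<Rightarrow> real \<Rightarrow> (nat \<Rightarrow> real) \<Rightarrow> (nat \<Rightarrow> real) \<Rightarrow> real" where
  "Wfun N L \<zeta> y = Inf {wfun N L \<zeta> y \<nu> \<alpha> | \<nu> \<alpha>.
      (\<forall>j\<le>N. 0 \<le> \<nu> j) \<and> (\<forall>i\<le>Suc N. 0 \<le> \<alpha> i) \<and> (\<Sum>i\<le>Suc N. \<alpha> i) = 1}"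

definition Wstar :: "nat \<Rightarrow> real \<Rightarrow> (nat \<Rightarrow> real) \<Rightarrow> real" where
  "Wstar N L \<zeta> = Inf (range (Wfun N L \<zeta>))"

end

theory Submission
  imports Defs
begin

(*
  Each coefficient f_i - |g_i|^2/(2L) equals L zeta_{i+1} >= 0, so w >= 0, while
  w(x_{N+1}, 0, e_{N+1}) = 0; hence W^* <= 0. For the lower bound put D = zeta_k - zeta_{k+1}
  and S = sum_{i >= k} alpha_i (zeta_k - zeta_{i+1}) >= 0. The k-th coordinate of the vector
  inside the norm is y_k + nu_k + S / sqrt D >= S / sqrt D, and the linear part is at least
  L (zeta_k - S) because zeta_{i+1} >= zeta_k for i < k. Since S^2/D >= 2S - D, the total is
  at least L zeta_k - L D / 2 = f_k.
*)

lemma quadratic_over_ge_linear: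
  fixes S D :: real
  assumes "D > 0"
  shows "2 * S - D \<le> S\<^sup>2 / D"
proof -
  have "(2 * S - D) * D \<le> S\<^sup>2"
    using sum_squares_ge_zero[of "S - D" 0] by (simp add: power2_eq_square algebra_simps)
  then show ?thesis
    using assms by (simp add: pos_le_divide_eq)
qed

lemma sqnorm_nonneg: "0 \<le> sqnorm N v"
  by (simp add: sqnorm_def sum_nonneg)

lemma sqnorm_ge_component: "j \<le> N \<Longrightarrow> (v j)\<^sup>2 \<le> sqnorm N v"
  unfolding sqnorm_def by (rule member_le_sum) auto

locale decreasing_zeta =
  fixes N :: nat and L :: real and \<zeta> :: "nat \<Rightarrow> real"
  assumes L_pos: "L > 0"
    and \<zeta>_decreasing: "\<forall>i\<le>Suc N. \<zeta> (Suc i) < \<zeta> i"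
    and \<zeta>_last: "\<zeta> (Suc (Suc N)) = 0"
begin

lemma \<zeta>_antimono:
  assumes "m \<le> n" and "n \<le> Suc (Suc N)"
  shows "\<zeta> n \<le> \<zeta> m"
  by (rule lift_Suc_antimono_le_ivl[where N = "{..Suc N}"])
    (use assms \<zeta>_decreasing in \<open>auto intro: less_imp_le\<close>)

lemma \<zeta>_nonneg: "n \<le> Suc (Suc N) \<Longrightarrow> 0 \<le> \<zeta> n"
  using \<zeta>_antimono[of n "Suc (Suc N)"] \<zeta>_last by simp

lemma step_component:
  assumes "k \<le> N" and "i \<le> Suc N"
  shows "xv N \<zeta> i k - gv N L \<zeta> i k / L =
    - (if k \<le> i then \<zeta> k - \<zeta> (Suc i) else 0) / sqrt (\<zeta> k - \<zeta> (Suc k))"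
proof -
  have "0 < \<zeta> k - \<zeta> (Suc k)"
    using assms \<zeta>_decreasing by simp
  then have "sqrt (\<zeta> k - \<zeta> (Suc k)) * sqrt (\<zeta> k - \<zeta> (Suc k)) = \<zeta> k - \<zeta> (Suc k)"
    "sqrt (\<zeta> k - \<zeta> (Suc k)) > 0"
    by simp_all
  then show ?thesis
    using assms L_pos by (auto simp: xv_def gv_def field_simps)
qed

lemma offset_coefficient:
  assumes "i \<le> Suc N"
  shows "fv N L \<zeta> i - sqnorm N (gv N L \<zeta> i) / (2 * L) = L * \<zeta> (Suc i)"
proof (cases "i \<le> N")
  case True
  have "sqnorm N (gv N L \<zeta> i) = (L * sqrt (\<zeta> i - \<zeta> (Suc i)))\<^sup>2"
    unfolding sqnorm_def gv_def using True by (simp add: if_distrib[of "\<lambda>x. x\<^sup>2"] cong: if_cong)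
  also have "\<dots> = L\<^sup>2 * (\<zeta> i - \<zeta> (Suc i))"
    using True \<zeta>_decreasing by (simp add: power_mult_distrib less_imp_le)
  finally show ?thesis
    using True L_pos by (simp add: fv_def power2_eq_square field_simps)
next
  case False
  with assms have "i = Suc N" by simp
  then show ?thesis
    using \<zeta>_last by (simp add: fv_def gv_def sqnorm_def)
qed

lemma offset_sum:
  "(\<Sum>i\<le>Suc N. \<alpha> i * (fv N L \<zeta> i - sqnorm N (gv N L \<zeta> i) / (2 * L)))
     = L * (\<Sum>i\<le>Suc N. \<alpha> i * \<zeta> (Suc i))"
  unfolding sum_distrib_left by (rule sum.cong) (simp_all add: offset_coefficient)

lemma wfun_nonneg:
  assumes "\<forall>i\<le>Suc N. 0 \<le> \<alpha> i"
  shows "0 \<le> wfun N L \<zeta> y \<nu> \<alpha>"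
proof -
  have "0 \<le> (\<Sum>i\<le>Suc N. \<alpha> i * \<zeta> (Suc i))"
    using assms \<zeta>_nonneg by (intro sum_nonneg) simp
  then show ?thesis
    unfolding wfun_def offset_sum using L_pos sqnorm_nonneg by simp
qed

lemma wfun_ge_fv:
  assumes k: "k \<le> N" and yk: "0 \<le> y k" and \<nu>: "\<forall>j\<le>N. 0 \<le> \<nu> j"
    and \<alpha>: "\<forall>i\<le>Suc N. 0 \<le> \<alpha> i" and \<alpha>_sum: "(\<Sum>i\<le>Suc N. \<alpha> i) = 1"
  shows "fv N L \<zeta> k \<le> wfun N L \<zeta> y \<nu> \<alpha>"
proof -
  define D where "D = \<zeta> k - \<zeta> (Suc k)"
  define S where "S = (\<Sum>i\<le>Suc N. \<alpha> i * (if k \<le> i then \<zeta> k - \<zeta> (Suc i) else 0))"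
  define v where "v = (\<lambda>j. y j + \<nu> j - (\<Sum>i\<le>Suc N. \<alpha> i * (xv N \<zeta> i j - gv N L \<zeta> i j / L)))"
  have D_pos: "0 < D"
    using k \<zeta>_decreasing by (simp add: D_def)
  have S_nonneg: "0 \<le> S"
    unfolding S_def using \<alpha> \<zeta>_antimono[of k] by (intro sum_nonneg) simp
  have "v k = y k + \<nu> k + S / sqrt D"
    unfolding v_def S_def D_def using k
    by (simp add: step_component sum_divide_distrib[symmetric] sum_negf)
  then have "S / sqrt D \<le> v k"
    using yk \<nu> k by simp
  then have "(S / sqrt D)\<^sup>2 \<le> sqnorm N v"
    using S_nonneg D_pos sqnorm_ge_component[OF k, of v]
    by (meson divide_nonneg_pos order_trans power_mono real_sqrt_gt_zero)
  then have norm_bound: "S\<^sup>2 / D \<le> sqnorm N v"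
    using D_pos by (simp add: power_divide)
  have "\<zeta> k = (\<Sum>i\<le>Suc N. \<alpha> i * \<zeta> k)"
    using \<alpha>_sum by (simp add: sum_distrib_right[symmetric])
  also have "\<dots> \<le> (\<Sum>i\<le>Suc N. \<alpha> i * \<zeta> (Suc i) + \<alpha> i * (if k \<le> i then \<zeta> k - \<zeta> (Suc i) else 0))"
    using \<alpha> \<zeta>_antimono[of "Suc _" k] k
    by (intro sum_mono) (auto simp: algebra_simps mult_left_mono)
  also have "\<dots> = (\<Sum>i\<le>Suc N. \<alpha> i * \<zeta> (Suc i)) + S"
    by (simp add: S_def sum.distrib)
  finally have linear_bound: "\<zeta> k - S \<le> (\<Sum>i\<le>Suc N. \<alpha> i * \<zeta> (Suc i))"
    by simp
  have "fv N L \<zeta> k = L / 2 * (2 * S - D) + L * (\<zeta> k - S)"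
    using k by (simp add: fv_def D_def algebra_simps)
  also have "\<dots> \<le> L / 2 * sqnorm N v + L * (\<Sum>i\<le>Suc N. \<alpha> i * \<zeta> (Suc i))"
    using quadratic_over_ge_linear[OF D_pos, of S] norm_bound linear_bound L_pos
    by (intro add_mono mult_left_mono) auto
  also have "\<dots> = wfun N L \<zeta> y \<nu> \<alpha>"
    unfolding wfun_def offset_sum v_def ..
  finally show ?thesis .
qed

lemma Wfun_greatest:
  assumes "\<And>\<nu> \<alpha>. \<lbrakk>\<forall>j\<le>N. 0 \<le> \<nu> j; \<forall>i\<le>Suc N. 0 \<le> \<alpha> i; (\<Sum>i\<le>Suc N. \<alpha> i) = 1\<rbrakk>
      \<Longrightarrow> c \<le> wfun N L \<zeta> y \<nu> \<alpha>"
  shows "c \<le> Wfun N L \<zeta> y"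
  unfolding Wfun_def
proof (rule cInf_greatest)
  let ?\<alpha> = "\<lambda>i. if i = 0 then 1 else 0 :: real"
  have "(\<Sum>i\<le>Suc N. ?\<alpha> i) = 1"
    by simp
  then have "wfun N L \<zeta> y (\<lambda>_. 0) ?\<alpha> \<in> {wfun N L \<zeta> y \<nu> \<alpha> | \<nu> \<alpha>. (\<forall>j\<le>N. 0 \<le> \<nu> j)
      \<and> (\<forall>i\<le>Suc N. 0 \<le> \<alpha> i) \<and> (\<Sum>i\<le>Suc N. \<alpha> i) = 1}"
    by (intro CollectI exI[of _ "\<lambda>_. 0"] exI[of _ ?\<alpha>]) simp
  then show "{wfun N L \<zeta> y \<nu> \<alpha> | \<nu> \<alpha>. (\<forall>j\<le>N. 0 \<le> \<nu> j) \<and> (\<forall>i\<le>Suc N. 0 \<le> \<alpha> i)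
      \<and> (\<Sum>i\<le>Suc N. \<alpha> i) = 1} \<noteq> {}"
    by blast
qed (use assms in blast)

lemma Wfun_lower:
  assumes "\<forall>j\<le>N. 0 \<le> \<nu> j" and "\<forall>i\<le>Suc N. 0 \<le> \<alpha> i" and "(\<Sum>i\<le>Suc N. \<alpha> i) = 1"
  shows "Wfun N L \<zeta> y \<le> wfun N L \<zeta> y \<nu> \<alpha>"
  unfolding Wfun_def
proof (rule cInf_lower)
  show "bdd_below {wfun N L \<zeta> y \<nu> \<alpha> | \<nu> \<alpha>. (\<forall>j\<le>N. 0 \<le> \<nu> j)
      \<and> (\<forall>i\<le>Suc N. 0 \<le> \<alpha> i) \<and> (\<Sum>i\<le>Suc N. \<alpha> i) = 1}"
    by (rule bdd_belowI[of _ 0]) (auto intro: wfun_nonneg)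
qed (use assms in blast)

lemma Wfun_nonneg: "0 \<le> Wfun N L \<zeta> y"
  by (rule Wfun_greatest) (rule wfun_nonneg)

lemma Wstar_nonpos: "Wstar N L \<zeta> \<le> 0"
proof -
  define e where "e = (\<lambda>i::nat. if i = Suc N then 1 else (0::real))"
  have "Wstar N L \<zeta> \<le> Wfun N L \<zeta> (xv N \<zeta> (Suc N))"
    unfolding Wstar_def using Wfun_nonneg by (intro cInf_lower) (auto simp: bdd_below_def)
  also have "\<dots> \<le> wfun N L \<zeta> (xv N \<zeta> (Suc N)) (\<lambda>_. 0) e"
    by (rule Wfun_lower) (auto simp: e_def)
  also have "\<dots> = 0"
    by (simp add: wfun_def e_def fv_def gv_def sqnorm_def if_distrib cong: if_cong)
  finally show ?thesis .
qed

end

theorem corollary2: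
  fixes N :: nat and L :: real and \<zeta> :: "nat \<Rightarrow> real" and ybar :: "nat \<Rightarrow> real" and k :: nat
  assumes "N \<ge> 1" and "L > 0"
    and "\<forall>i\<le>Suc N. \<zeta> (Suc i) < \<zeta> i" and "\<zeta> (Suc (Suc N)) = 0"
    and "k \<le> N" and "ybar k \<ge> 0"
  shows "Wfun N L \<zeta> ybar - Wstar N L \<zeta> \<ge> fv N L \<zeta> k"
proof -
  interpret decreasing_zeta N L \<zeta>
    using assms(2-4) by unfold_locales
  have "fv N L \<zeta> k \<le> Wfun N L \<zeta> ybar"
    by (rule Wfun_greatest) (rule wfun_ge_fv[where y = ybar, OF assms(5,6)])
  then show ?thesis
    using Wstar_nonpos by linarith
qed

end
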